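(* Let $(E,\rho)$ be a complete partial $v$-generalized metric space and let $S:E\to E$ satisfy $\rho(Su,Sw)\le\lambda\rho(u,w)$ for all $u,w\in E$, where $\lambda\in[0,1)$. Then $S$ has a unique fixed point $b\in E$, and $\rho(b,b)=0$.
   Context: Let $E$ be a nonempty set and $v\in\mathbb{N}$. $(E,\rho)$, with $\rho:E\times E\to[0,\infty)$, is a partial $v$-generalized metric space if for all $u,w,z_1,\dots,z_v\in E$: (1) $u=w$ iff $\rho(u,u)=\rho(u,w)=\rho(w,w)$; (2) $\rho(u,u)\le\rho(u,w)$; (3) $\rho(u,w)=\rho(w,u)$; (4) $\rho(u,w)\le\rho(u,z_1)+\rho(z_1,z_2)+\dots+\rho(z_{v-1},z_v)+\rho(z_v,w)-\sum_{i=1}^v\rho(z_i,z_i)$. A sequence $\{u_n\}$ in $E$ converges to $u\in E$ if $\lim_{n\to\infty}\rho(u_n,u)=\rho(u,u)$; it is Cauchy if $\lim_{n,m\to\infty}\rho(u_n,u_m)$ exists and is finite. $(E,\rho)$ is complete if for every Cauchy sequence $\{u_n\}$ there is $u\in E$ with $\lim_{n,m\to\infty}\rho(u_n,u_m)=\lim_{n\to\infty}\rho(u_n,u)=\rho(u,u)$. *)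

theory Defs
  imports "HOL-Analysis.Analysis"
begin

text \<open>Partial v-generalized metric space on carrier E (v \<in> \<nat>, taken as v \<ge> 1).
  The intermediate points z_1..z_v are given by a function z restricted to {1..v}.\<close>
definition partial_v_gen_metric :: "nat \<Rightarrow> 'a set \<Rightarrow> ('a \<Rightarrow> 'a \<Rightarrow> real) \<Rightarrow> bool" where
  "partial_v_gen_metric v E \<rho> \<longleftrightarrow>
     E \<noteq> {} \<and> v \<ge> 1 \<and>
     (\<forall>u\<in>E. \<forall>w\<in>E. \<rho> u w \<ge> 0) \<and>
     (\<forall>u\<in>E. \<forall>w\<in>E. u = w \<longleftrightarrow> (\<rho> u u = \<rho> u w \<and> \<rho> u w = \<rho> w w)) \<and>
     (\<forall>u\<in>E. \<forall>w\<in>E. \<rho> u u \<le> \<rho> u w) \<and>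
     (\<forall>u\<in>E. \<forall>w\<in>E. \<rho> u w = \<rho> w u) \<and>
     (\<forall>u\<in>E. \<forall>w\<in>E. \<forall>z. (\<forall>i\<in>{1..v}. z i \<in> E) \<longrightarrow>
        \<rho> u w \<le> \<rho> u (z 1) + (\<Sum>i=1..<v. \<rho> (z i) (z (Suc i))) + \<rho> (z v) w
                  - (\<Sum>i=1..v. \<rho> (z i) (z i)))"

definition pvgm_converges :: "('a \<Rightarrow> 'a \<Rightarrow> real) \<Rightarrow> (nat \<Rightarrow> 'a) \<Rightarrow> 'a \<Rightarrow> bool" where
  "pvgm_converges \<rho> s u \<longleftrightarrow> ((\<lambda>n. \<rho> (s n) u) \<longlongrightarrow> \<rho> u u) sequentially"

definition pvgm_cauchy :: "('a \<Rightarrow> 'a \<Rightarrow> real) \<Rightarrow> (nat \<Rightarrow> 'a) \<Rightarrow> bool" where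
  "pvgm_cauchy \<rho> s \<longleftrightarrow>
     (\<exists>L::real. ((\<lambda>(n, m). \<rho> (s n) (s m)) \<longlongrightarrow> L) (sequentially \<times>\<^sub>F sequentially))"

definition pvgm_complete :: "'a set \<Rightarrow> ('a \<Rightarrow> 'a \<Rightarrow> real) \<Rightarrow> bool" where
  "pvgm_complete E \<rho> \<longleftrightarrow>
     (\<forall>s. (\<forall>n. s n \<in> E) \<longrightarrow> pvgm_cauchy \<rho> s \<longrightarrow>
        (\<exists>u\<in>E. ((\<lambda>(n, m). \<rho> (s n) (s m)) \<longlongrightarrow> \<rho> u u) (sequentially \<times>\<^sub>F sequentially)
               \<and> ((\<lambda>n. \<rho> (s n) u) \<longlongrightarrow> \<rho> u u) sequentially))"

end

theory Submission
  imports Defs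
begin

text \<open>Taking all intermediate points \<open>z\<^sub>i\<close> equal to one point \<open>a\<close> collapses the
  \<open>v\<close>-generalized triangle inequality to the partial-metric one
  \<open>\<rho> u w \<le> \<rho> u a + \<rho> a w - \<rho> a a\<close>, and with it Banach's argument goes through.
  Consecutive Picard iterates have geometrically decaying distances, so \<open>\<rho> (x\<^sub>n) (x\<^sub>m)\<close>
  tends to \<open>0\<close>; completeness yields a limit \<open>u\<close> with \<open>\<rho> u u = 0\<close>, and the bound
  \<open>\<rho> (S u) u \<le> \<lambda> \<rho> (x\<^sub>n) u + \<rho> (x\<^sub>n\<^sub>+\<^sub>1) u\<close>, whose right side tends to \<open>0\<close>, forces \<open>S u = u\<close>.
  A fixed point \<open>b\<close> satisfies \<open>\<rho> b b \<le> \<lambda> \<rho> b b\<close>, hence \<open>\<rho> b b = 0\<close>; likewise two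
  fixed points are at distance \<open>0\<close> and therefore equal.\<close>

lemma eq_0_if_le_contracted:
  fixes x lam :: real
  assumes "0 \<le> x" "lam < 1" "x \<le> lam * x"
  shows "x = 0"
  using assms by (smt (verit) mult_le_cancel_right1)

lemma geometric_partial_sum_le:
  fixes lam :: real
  assumes "0 \<le> lam" "lam < 1"
  shows "(\<Sum>i<k. lam ^ i) \<le> 1 / (1 - lam)"
  using assms sum_le_suminf[OF summable_geometric, of lam "{..<k}"] suminf_geometric[of lam]
  by auto

locale partial_v_gen_metric_space =
  fixes v :: nat and E :: "'a set" and \<rho> :: "'a \<Rightarrow> 'a \<Rightarrow> real"
  assumes partial_v_gen_metric: "partial_v_gen_metric v E \<rho>"
begin

lemma nonempty: "E \<noteq> {}"
  and nonneg: "u \<in> E \<Longrightarrow> w \<in> E \<Longrightarrow> 0 \<le> \<rho> u w"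
  and self_le: "u \<in> E \<Longrightarrow> w \<in> E \<Longrightarrow> \<rho> u u \<le> \<rho> u w"
  and sym: "u \<in> E \<Longrightarrow> w \<in> E \<Longrightarrow> \<rho> u w = \<rho> w u"
  and eqI: "u \<in> E \<Longrightarrow> w \<in> E \<Longrightarrow> \<rho> u u = \<rho> u w \<Longrightarrow> \<rho> w w = \<rho> u w \<Longrightarrow> u = w"
  using partial_v_gen_metric unfolding partial_v_gen_metric_def by auto

lemma triangle:
  assumes "u \<in> E" "a \<in> E" "w \<in> E"
  shows "\<rho> u w \<le> \<rho> u a + \<rho> a w - \<rho> a a"
proof -
  have "v \<ge> 1"
    using partial_v_gen_metric unfolding partial_v_gen_metric_def by simp
  have "\<rho> u w \<le> \<rho> u a + (\<Sum>i=1..<v. \<rho> a a) + \<rho> a w - (\<Sum>i=1..v. \<rho> a a)"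
    using partial_v_gen_metric assms unfolding partial_v_gen_metric_def by fastforce
  also have "\<dots> = \<rho> u a + \<rho> a w - \<rho> a a"
    using \<open>v \<ge> 1\<close> by (simp add: of_nat_diff algebra_simps)
  finally show ?thesis .
qed

lemma dist_le_if_geometric_steps:
  fixes lam d :: real
  assumes "\<And>n. x n \<in> E" "0 \<le> lam" "lam < 1"
    and steps: "\<And>n. \<rho> (x n) (x (Suc n)) \<le> lam ^ n * d"
  shows "\<rho> (x n) (x (n + k)) \<le> lam ^ n * (d * (1 + 1 / (1 - lam)))"
proof -
  have chain: "\<rho> (x n) (x (n + k)) \<le> lam ^ n * d * (1 + (\<Sum>i<k. lam ^ i))" for k
  proof (induction k)
    case 0
    show ?case
      using self_le[OF assms(1,1), of n "Suc n"] steps[of n] by simp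
  next
    case (Suc k)
    have "\<rho> (x n) (x (n + Suc k))
        \<le> \<rho> (x n) (x (n + k)) + \<rho> (x (n + k)) (x (Suc (n + k))) - \<rho> (x (n + k)) (x (n + k))"
      using triangle[OF assms(1,1,1)] by simp
    also have "\<dots> \<le> lam ^ n * d * (1 + (\<Sum>i<k. lam ^ i)) + lam ^ (n + k) * d"
      using Suc.IH steps[of "n + k"] nonneg[OF assms(1,1), of "n + k" "n + k"] by linarith
    also have "\<dots> = lam ^ n * d * (1 + (\<Sum>i<Suc k. lam ^ i))"
      by (simp add: algebra_simps power_add)
    finally show ?case .
  qed
  have "0 \<le> d"
    using steps[of 0] nonneg[OF assms(1,1), of 0 1] by simp
  then have "lam ^ n * d * (1 + (\<Sum>i<k. lam ^ i)) \<le> lam ^ n * d * (1 + 1 / (1 - lam))"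
    using geometric_partial_sum_le[OF assms(2,3)] assms(2) by (intro mult_left_mono) auto
  then show ?thesis
    using chain[of k] by (simp add: mult.assoc)
qed

lemma double_limit_zero_if_geometric_steps:
  fixes lam d :: real
  assumes xE: "\<And>n. x n \<in> E" and "0 \<le> lam" "lam < 1"
    and steps: "\<And>n. \<rho> (x n) (x (Suc n)) \<le> lam ^ n * d"
  shows "((\<lambda>(n, m). \<rho> (x n) (x m)) \<longlongrightarrow> 0) (sequentially \<times>\<^sub>F sequentially)"
proof (rule tendstoI)
  fix e :: real
  assume "e > 0"
  define C where "C = d * (1 + 1 / (1 - lam))"
  have bound: "\<rho> (x n) (x (n + k)) \<le> lam ^ n * C" for n k
    unfolding C_def using dist_le_if_geometric_steps assms by blast
  then have "0 \<le> C"
    using nonneg[OF xE xE, of 0 0] by (metis add_0_right mult_1 power_0 order.trans)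
  have "(\<lambda>N. lam ^ N * C) \<longlonglongrightarrow> 0"
    using assms(2,3) by (intro tendsto_mult_left_zero LIMSEQ_power_zero) auto
  from order_tendstoD(2)[OF this \<open>e > 0\<close>] obtain N where N: "lam ^ N * C < e"
    by (auto simp: eventually_sequentially)
  have "\<rho> (x n) (x m) < e" if "n \<ge> N" "m \<ge> N" for n m
  proof -
    have tail: "\<rho> (x n) (x m) \<le> lam ^ n * C" if "n \<le> m" for n m
      using bound[of n "m - n"] that by simp
    have "lam ^ min n m * C \<le> lam ^ N * C"
      using that assms(2,3) \<open>0 \<le> C\<close> by (intro mult_right_mono power_decreasing) auto
    moreover have "\<rho> (x n) (x m) \<le> lam ^ min n m * C"
      using tail[of n m] tail[of m n] sym[OF xE xE, of n m] by (cases "n \<le> m") auto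
    ultimately show ?thesis
      using N by linarith
  qed
  then show "\<forall>\<^sub>F p in sequentially \<times>\<^sub>F sequentially. dist ((\<lambda>(n, m). \<rho> (x n) (x m)) p) 0 < e"
    unfolding eventually_prod_sequentially using nonneg[OF xE xE] by (auto simp: dist_real_def)
qed

end

locale partial_v_gen_metric_contraction = partial_v_gen_metric_space +
  fixes S :: "'a \<Rightarrow> 'a" and lam :: real
  assumes maps_to: "\<And>u. u \<in> E \<Longrightarrow> S u \<in> E"
    and lam_nonneg: "0 \<le> lam" and lam_less_1: "lam < 1"
    and contracts: "\<And>u w. u \<in> E \<Longrightarrow> w \<in> E \<Longrightarrow> \<rho> (S u) (S w) \<le> lam * \<rho> u w"
begin

lemma fixed_point_self_dist_0:
  assumes "b \<in> E" "S b = b"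
  shows "\<rho> b b = 0"
  using contracts[of b b] assms eq_0_if_le_contracted[OF nonneg lam_less_1] by simp

lemma fixed_point_unique:
  assumes "a \<in> E" "S a = a" "b \<in> E" "S b = b"
  shows "a = b"
proof -
  have "\<rho> a b = 0"
    using contracts[of a b] assms eq_0_if_le_contracted[OF nonneg lam_less_1] by simp
  then show ?thesis
    using eqI assms fixed_point_self_dist_0 by metis
qed

lemma iterates_in: "x0 \<in> E \<Longrightarrow> (S ^^ n) x0 \<in> E"
  by (induction n) (auto intro: maps_to)

lemma iterates_step_le:
  assumes "x0 \<in> E"
  shows "\<rho> ((S ^^ n) x0) ((S ^^ Suc n) x0) \<le> lam ^ n * \<rho> x0 (S x0)"
proof (induction n)
  case (Suc n)
  have "\<rho> ((S ^^ Suc n) x0) ((S ^^ Suc (Suc n)) x0) \<le> lam * \<rho> ((S ^^ n) x0) ((S ^^ Suc n) x0)"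
    using contracts[OF iterates_in[OF assms] iterates_in[OF assms], of n "Suc n"] by simp
  also have "\<dots> \<le> lam * (lam ^ n * \<rho> x0 (S x0))"
    using Suc.IH lam_nonneg by (rule mult_left_mono)
  finally show ?case by simp
qed simp

lemma limit_of_orbit_is_fixed_point:
  assumes xE: "\<And>n. x n \<in> E" and x_Suc: "\<And>n. x (Suc n) = S (x n)"
    and "u \<in> E" "\<rho> u u = 0" and lim: "(\<lambda>n. \<rho> (x n) u) \<longlonglongrightarrow> 0"
  shows "S u = u"
proof -
  have Su: "S u \<in> E"
    using maps_to \<open>u \<in> E\<close> .
  have "\<rho> (S u) u \<le> lam * \<rho> (x n) u + \<rho> (x (Suc n)) u" for n
  proof -
    have "\<rho> (S u) u \<le> \<rho> (S u) (x (Suc n)) + \<rho> (x (Suc n)) u - \<rho> (x (Suc n)) (x (Suc n))"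
      using triangle[OF Su xE \<open>u \<in> E\<close>] .
    moreover have "\<rho> (S u) (x (Suc n)) \<le> lam * \<rho> (x n) u"
      using contracts[OF \<open>u \<in> E\<close> xE, of n] x_Suc sym[OF \<open>u \<in> E\<close> xE, of n] by simp
    ultimately show ?thesis
      using nonneg[OF xE xE, of "Suc n" "Suc n"] by linarith
  qed
  moreover have "(\<lambda>n. lam * \<rho> (x n) u + \<rho> (x (Suc n)) u) \<longlonglongrightarrow> lam * 0 + 0"
    using lim LIMSEQ_Suc[OF lim] by (intro tendsto_intros)
  ultimately have "\<rho> (S u) u \<le> 0"
    by (intro LIMSEQ_le_const) auto
  then have "\<rho> (S u) u = 0"
    using nonneg[OF Su \<open>u \<in> E\<close>] by simp
  moreover have "\<rho> (S u) (S u) = 0"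
    using self_le[OF Su \<open>u \<in> E\<close>] nonneg[OF Su Su] \<open>\<rho> (S u) u = 0\<close> by simp
  ultimately show "S u = u"
    using eqI[OF Su \<open>u \<in> E\<close>] \<open>\<rho> u u = 0\<close> by simp
qed

lemma fixed_point_exists_if_complete:
  assumes "pvgm_complete E \<rho>"
  obtains b where "b \<in> E" "S b = b"
proof -
  obtain x0 where "x0 \<in> E"
    using nonempty by blast
  define x where "x n = (S ^^ n) x0" for n
  have xE: "\<And>n. x n \<in> E"
    unfolding x_def using iterates_in[OF \<open>x0 \<in> E\<close>] .
  have cauchy: "((\<lambda>(n, m). \<rho> (x n) (x m)) \<longlongrightarrow> 0) (sequentially \<times>\<^sub>F sequentially)"
    using iterates_step_le[OF \<open>x0 \<in> E\<close>] unfolding x_def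
    by (intro double_limit_zero_if_geometric_steps[OF xE[unfolded x_def] lam_nonneg lam_less_1])
  then obtain u where "u \<in> E"
    and lim_double: "((\<lambda>(n, m). \<rho> (x n) (x m)) \<longlongrightarrow> \<rho> u u) (sequentially \<times>\<^sub>F sequentially)"
    and lim: "(\<lambda>n. \<rho> (x n) u) \<longlonglongrightarrow> \<rho> u u"
    using assms xE unfolding pvgm_complete_def pvgm_cauchy_def by blast
  have "\<rho> u u = 0"
    using tendsto_unique[OF _ lim_double cauchy] by (simp add: prod_filter_eq_bot)
  moreover have "x (Suc n) = S (x n)" for n
    by (simp add: x_def)
  ultimately have "S u = u"
    using limit_of_orbit_is_fixed_point[of x u] xE \<open>u \<in> E\<close> lim by simp
  with \<open>u \<in> E\<close> show thesis ..
qed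

end

theorem mainTheorem5:
  fixes E :: "'a set" and \<rho> :: "'a \<Rightarrow> 'a \<Rightarrow> real" and S :: "'a \<Rightarrow> 'a"
    and v :: nat and lam :: real
  assumes "partial_v_gen_metric v E \<rho>"
    and "pvgm_complete E \<rho>"
    and "\<forall>u\<in>E. S u \<in> E"
    and "0 \<le> lam" and "lam < 1"
    and "\<forall>u\<in>E. \<forall>w\<in>E. \<rho> (S u) (S w) \<le> lam * \<rho> u w"
  shows "(\<exists>!b. b \<in> E \<and> S b = b) \<and> (\<forall>b\<in>E. S b = b \<longrightarrow> \<rho> b b = 0)"
proof -
  interpret partial_v_gen_metric_contraction v E \<rho> S lam
    using assms by unfold_locales auto
  obtain b where "b \<in> E" "S b = b"
    using fixed_point_exists_if_complete[OF assms(2)] .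
  then show ?thesis
    using fixed_point_unique fixed_point_self_dist_0 by blast
qed

end
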